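(* Let $X,Y$ be metric spaces, $X\times Y$ with the maximum metric, $E\subseteq X\times Y$, and let $A\subseteq X$ be a set such that $E_x=\{y\in Y:(x,y)\in E\}\ne\emptyset$ for all $x\in A$. Then (i) $\dim_{\mathrm P}E\ge\dim_{\mathrm P}A+\inf_{x\in A}\vec{\dim}_{\mathrm P}E_x$; (ii) $\underline{\dim}_{\mathrm P}E\ge\underline{\dim}_{\mathrm P}A+\inf_{x\in A}\underline{\dim}_{\mathrm P}E_x$; (iii) $\vec{\dim}_{\mathrm P}E\ge\vec{\dim}_{\mathrm P}A+\inf_{x\in A}\vec{\dim}_{\mathrm P}E_x$.
   Context: For a subset $E$ of a metric space, $N_\delta(E)$ is the minimal cardinality of a cover of $E$ by sets of diameter at most $\delta$. $\underline{\dim}_{\mathrm B}E=\liminf_{\delta\to0}\frac{\log N_\delta(E)}{|\log\delta|}$, $\overline{\dim}_{\mathrm B}E=\limsup_{\delta\to0}\frac{\log N_\delta(E)}{|\log\delta|}$. $\dim_{\mathrm P}E=\inf\{\sup_n\overline{\dim}_{\mathrm B}E_n:E\subseteq\bigcup_nE_n\}$, $\underline{\dim}_{\mathrm P}E=\inf\{\sup_n\underline{\dim}_{\mathrm B}E_n:E\subseteq\bigcup_nE_n\}$ (countable covers), and $\vec{\dim}_{\mathrm P}E=\inf\{\sup_n\underline{\dim}_{\mathrm B}E_n:E_n\uparrow E\}$, where $E_n\uparrow E$ means $(E_n)$ is an increasing sequence of sets with union $E$. *)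

theory Defs
  imports "HOL-Analysis.Analysis" "HOL-Library.Liminf_Limsup"
begin

text \<open>All notions are taken relative to an explicit distance function d, so that the
  product X \<times> Y can carry the maximum metric.\<close>

definition ddiam :: "('a \<Rightarrow> 'a \<Rightarrow> real) \<Rightarrow> 'a set \<Rightarrow> ereal" where
  "ddiam d S = Sup {ereal (d x y) | x y. x \<in> S \<and> y \<in> S}"

definition cover_num :: "('a \<Rightarrow> 'a \<Rightarrow> real) \<Rightarrow> real \<Rightarrow> 'a set \<Rightarrow> ereal" where
  "cover_num d \<delta> E = Inf {ereal (real (card C)) | C. finite C \<and> E \<subseteq> \<Union>C \<and>
                                (\<forall>S\<in>C. ddiam d S \<le> ereal \<delta>)}"

definition log_cover_num :: "('a \<Rightarrow> 'a \<Rightarrow> real) \<Rightarrow> real \<Rightarrow> 'a set \<Rightarrow> ereal" where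
  "log_cover_num d \<delta> E =
     (if cover_num d \<delta> E = \<infinity> then \<infinity>
      else ereal (ln (max 1 (real_of_ereal (cover_num d \<delta> E)))))"

definition lower_box_dim :: "('a \<Rightarrow> 'a \<Rightarrow> real) \<Rightarrow> 'a set \<Rightarrow> ereal" where
  "lower_box_dim d E = Liminf (at_right 0) (\<lambda>\<delta>. log_cover_num d \<delta> E / ereal \<bar>ln \<delta>\<bar>)"

definition upper_box_dim :: "('a \<Rightarrow> 'a \<Rightarrow> real) \<Rightarrow> 'a set \<Rightarrow> ereal" where
  "upper_box_dim d E = Limsup (at_right 0) (\<lambda>\<delta>. log_cover_num d \<delta> E / ereal \<bar>ln \<delta>\<bar>)"

definition packing_dim :: "('a \<Rightarrow> 'a \<Rightarrow> real) \<Rightarrow> 'a set \<Rightarrow> ereal" where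
  "packing_dim d E = Inf {(SUP n::nat. upper_box_dim d (F n)) | F. E \<subseteq> (\<Union>n::nat. F n)}"

definition lower_packing_dim :: "('a \<Rightarrow> 'a \<Rightarrow> real) \<Rightarrow> 'a set \<Rightarrow> ereal" where
  "lower_packing_dim d E = Inf {(SUP n::nat. lower_box_dim d (F n)) | F. E \<subseteq> (\<Union>n::nat. F n)}"

definition inc_packing_dim :: "('a \<Rightarrow> 'a \<Rightarrow> real) \<Rightarrow> 'a set \<Rightarrow> ereal" where
  "inc_packing_dim d E = Inf {(SUP n::nat. lower_box_dim d (F n)) | F. incseq F \<and> (\<Union>n::nat. F n) = E}"

definition max_dist :: "'a::metric_space \<times> 'b::metric_space \<Rightarrow> 'a \<times> 'b \<Rightarrow> real" where
  "max_dist p q = max (dist (fst p) (fst q)) (dist (snd p) (snd q))"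

definition fiber :: "('a \<times> 'b) set \<Rightarrow> 'a \<Rightarrow> 'b set" where
  "fiber E x = {y. (x, y) \<in> E}"

end

theory Submission
  imports Defs
begin

text \<open>Fix s below the dimensions of the fibers. Covering the fibers at scale \<delta> needs at least
  \<delta> powr -s sets, and a set of diameter \<delta> in X \<times> Y meets the fibers over at most one point of a
  \<delta>-separated subset P of A. Taking P maximal, it is a 2\<delta>-net, so
  N_\<delta>(E) \<ge> N_2\<delta>(A) \<delta> powr -s; taking logarithms, every box dimension of E exceeds that of A by s.
  For the packing-type dimensions, given a decomposition (F n) of E, the points of A whose fiber in
  F n already obeys the bound below scale 1/(k+1) form countably many sets B(n,k) covering A (an
  increasing family, for the increasing variants), and the box-dimension estimate applies to each
  B(n,k) against F n.\<close>

lemma cover_num_greatest: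
  assumes "\<And>C. finite C \<Longrightarrow> E \<subseteq> \<Union>C \<Longrightarrow> \<forall>S\<in>C. ddiam d S \<le> ereal \<delta> \<Longrightarrow> c \<le> real (card C)"
  shows "ereal c \<le> cover_num d \<delta> E"
  unfolding cover_num_def using assms by (auto intro!: Inf_greatest)

lemma cover_num_le_card:
  assumes "finite C" "E \<subseteq> \<Union>C" "\<forall>S\<in>C. ddiam d S \<le> ereal \<delta>"
  shows "cover_num d \<delta> E \<le> ereal (real (card C))"
  unfolding cover_num_def using assms by (auto intro!: Inf_lower)

lemma cover_num_nonneg: "0 \<le> cover_num d \<delta> E"
  using cover_num_greatest[of E d \<delta> 0] by (simp add: zero_ereal_def)

lemma cover_num_mono: "E \<subseteq> F \<Longrightarrow> cover_num d \<delta> E \<le> cover_num d \<delta> F"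
  unfolding cover_num_def by (rule Inf_superset_mono) blast

lemma cover_num_empty: "cover_num d \<delta> {} = 0"
  using cover_num_le_card[of "{}" "{}" d \<delta>] cover_num_nonneg[of d \<delta> "{}"]
  by (simp add: zero_ereal_def)

lemma cover_num_nonempty:
  assumes "E \<noteq> {}"
  shows "1 \<le> cover_num d \<delta> E"
proof -
  have "ereal 1 \<le> cover_num d \<delta> E"
    by (rule cover_num_greatest) (use assms in \<open>auto simp: Suc_le_eq card_gt_0_iff\<close>)
  then show ?thesis by (simp add: one_ereal_def)
qed

lemma cover_num_attained:
  assumes "cover_num d \<delta> E \<noteq> \<infinity>"
  obtains C where "finite C" "E \<subseteq> \<Union>C" "\<forall>S\<in>C. ddiam d S \<le> ereal \<delta>"
    "cover_num d \<delta> E = ereal (real (card C))"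
proof -
  define P where "P n \<longleftrightarrow> (\<exists>C. finite C \<and> E \<subseteq> \<Union>C \<and> (\<forall>S\<in>C. ddiam d S \<le> ereal \<delta>) \<and> card C = n)" for n
  have "\<exists>n. P n"
  proof (rule ccontr)
    assume "\<nexists>n. P n"
    then have "{ereal (real (card C)) |C. finite C \<and> E \<subseteq> \<Union>C \<and> (\<forall>S\<in>C. ddiam d S \<le> ereal \<delta>)} = {}"
      unfolding P_def by blast
    then show False using assms unfolding cover_num_def by (metis Inf_empty top_ereal_def)
  qed
  then have "P (LEAST n. P n)" by (rule LeastI_ex)
  then obtain C where C: "finite C" "E \<subseteq> \<Union>C" "\<forall>S\<in>C. ddiam d S \<le> ereal \<delta>" "card C = (LEAST n. P n)"
    unfolding P_def by blast
  have "ereal (real (card C)) \<le> cover_num d \<delta> E"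
  proof (rule cover_num_greatest)
    fix C' assume "finite C'" "E \<subseteq> \<Union>C'" "\<forall>S\<in>C'. ddiam d S \<le> ereal \<delta>"
    then have "P (card C')" unfolding P_def by blast
    then show "real (card C) \<le> real (card C')" using C(4) by (simp add: Least_le)
  qed
  with cover_num_le_card[OF C(1-3)] show thesis by (intro that[OF C(1-3)]) auto
qed

lemma cover_num_Un_le: "cover_num d \<delta> (A \<union> B) \<le> cover_num d \<delta> A + cover_num d \<delta> B"
proof (cases "cover_num d \<delta> A = \<infinity> \<or> cover_num d \<delta> B = \<infinity>")
  case True
  then show ?thesis using cover_num_nonneg[of d \<delta>] by auto
next
  case False
  then obtain CA CB where
    CA: "finite CA" "A \<subseteq> \<Union>CA" "\<forall>S\<in>CA. ddiam d S \<le> ereal \<delta>" "cover_num d \<delta> A = real (card CA)" and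
    CB: "finite CB" "B \<subseteq> \<Union>CB" "\<forall>S\<in>CB. ddiam d S \<le> ereal \<delta>" "cover_num d \<delta> B = real (card CB)"
    by (metis cover_num_attained)
  have "cover_num d \<delta> (A \<union> B) \<le> real (card (CA \<union> CB))"
    by (rule cover_num_le_card) (use CA CB in auto)
  also have "\<dots> \<le> real (card CA) + real (card CB)" using card_Un_le[of CA CB] by simp
  finally show ?thesis using CA(4) CB(4) by simp
qed

lemma log_cover_num_nonneg: "0 \<le> log_cover_num d \<delta> E"
  unfolding log_cover_num_def by auto

lemma log_cover_num_empty: "log_cover_num d \<delta> {} = 0"
  unfolding log_cover_num_def cover_num_empty by (simp add: zero_ereal_def)

lemma log_cover_num_le_ln:
  assumes "cover_num d \<delta> E \<le> ereal x"
  shows "log_cover_num d \<delta> E \<le> ereal (ln (max 1 x))"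
proof -
  obtain n where "cover_num d \<delta> E = ereal n" "n \<le> x"
    using assms cover_num_nonneg[of d \<delta> E] by (cases "cover_num d \<delta> E") auto
  then show ?thesis by (simp add: log_cover_num_def)
qed

lemma log_cover_num_mono:
  assumes "E \<subseteq> F"
  shows "log_cover_num d \<delta> E \<le> log_cover_num d \<delta> F"
proof (cases "cover_num d \<delta> F = \<infinity>")
  case True
  then show ?thesis by (simp add: log_cover_num_def)
next
  case False
  then obtain b where b: "cover_num d \<delta> F = ereal b"
    using cover_num_nonneg[of d \<delta> F] by (cases "cover_num d \<delta> F") auto
  then have "log_cover_num d \<delta> E \<le> ereal (ln (max 1 b))"
    using cover_num_mono[OF assms, of d \<delta>] by (intro log_cover_num_le_ln) simp
  then show ?thesis using b by (simp add: log_cover_num_def)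
qed

lemma ln_max_1_add_le:
  fixes a b :: real
  assumes "0 \<le> a" "0 \<le> b"
  shows "ln (max 1 (a + b)) \<le> ln 2 + max (ln (max 1 a)) (ln (max 1 b))"
proof -
  define m where "m = max (max 1 a) (max 1 b)"
  have "max 1 (a + b) \<le> 2 * m" using assms by (simp add: m_def max_def)
  then have "ln (max 1 (a + b)) \<le> ln (2 * m)" by (intro ln_mono) (auto simp: m_def)
  also have "\<dots> = ln 2 + ln m" by (simp add: ln_mult m_def)
  also have "ln m = max (ln (max 1 a)) (ln (max 1 b))"
    unfolding m_def by (cases "max 1 a \<le> max 1 b") (simp_all add: max_def)
  finally show ?thesis .
qed

lemma log_cover_num_Un_le:
  "log_cover_num d \<delta> (A \<union> B) \<le> ereal (ln 2) + max (log_cover_num d \<delta> A) (log_cover_num d \<delta> B)"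
proof (cases "cover_num d \<delta> A = \<infinity> \<or> cover_num d \<delta> B = \<infinity>")
  case True
  then show ?thesis by (auto simp: log_cover_num_def)
next
  case False
  obtain a where a: "cover_num d \<delta> A = ereal a" "0 \<le> a"
    using False cover_num_nonneg[of d \<delta> A] by (cases "cover_num d \<delta> A") auto
  obtain b where b: "cover_num d \<delta> B = ereal b" "0 \<le> b"
    using False cover_num_nonneg[of d \<delta> B] by (cases "cover_num d \<delta> B") auto
  have "cover_num d \<delta> (A \<union> B) \<le> ereal (a + b)" using cover_num_Un_le[of d \<delta> A B] a b by simp
  then have "log_cover_num d \<delta> (A \<union> B) \<le> ereal (ln (max 1 (a + b)))" by (rule log_cover_num_le_ln)
  also have "\<dots> \<le> ereal (ln 2 + max (ln (max 1 a)) (ln (max 1 b)))"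
    using ln_max_1_add_le[OF a(2) b(2)] by simp
  also have "\<dots> = ereal (ln 2) + max (log_cover_num d \<delta> A) (log_cover_num d \<delta> B)"
    using a b by (simp add: log_cover_num_def max_def)
  finally show ?thesis .
qed

lemma ddiam_le: "(\<And>x y. x \<in> S \<Longrightarrow> y \<in> S \<Longrightarrow> d x y \<le> \<delta>) \<Longrightarrow> ddiam d S \<le> ereal \<delta>"
  unfolding ddiam_def by (auto intro!: Sup_least)

lemma ddiam_leD:
  assumes "ddiam d S \<le> ereal \<delta>" "x \<in> S" "y \<in> S"
  shows "d x y \<le> \<delta>"
proof -
  have "ereal (d x y) \<le> ddiam d S" unfolding ddiam_def by (rule Sup_upper) (use assms in blast)
  also have "\<dots> \<le> ereal \<delta>" by (rule assms(1))
  finally show ?thesis by simp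
qed

lemma ddiam_fiber_le:
  assumes "ddiam max_dist S \<le> ereal \<delta>"
  shows "ddiam dist (fiber S x) \<le> ereal \<delta>"
proof (rule ddiam_le)
  fix y y' assume "y \<in> fiber S x" "y' \<in> fiber S x"
  then have "max_dist (x, y) (x, y') \<le> \<delta>" by (intro ddiam_leD[OF assms]) (auto simp: fiber_def)
  then show "dist y y' \<le> \<delta>" by (simp add: max_dist_def)
qed

definition separated :: "real \<Rightarrow> 'a::metric_space set \<Rightarrow> bool" where
  "separated \<delta> P \<longleftrightarrow> (\<forall>p\<in>P. \<forall>q\<in>P. p \<noteq> q \<longrightarrow> \<delta> < dist p q)"

lemma cover_num_fiber_le_card_meeting:
  fixes C :: "('a::metric_space \<times> 'b::metric_space) set set"
  assumes "finite C" "E \<subseteq> \<Union>C" "\<forall>S\<in>C. ddiam max_dist S \<le> ereal \<delta>"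
  shows "cover_num dist \<delta> (fiber E x) \<le> real (card {S\<in>C. fiber S x \<noteq> {}})"
proof -
  let ?C = "{S\<in>C. fiber S x \<noteq> {}}"
  have "cover_num dist \<delta> (fiber E x) \<le> real (card ((\<lambda>S. fiber S x) ` ?C))"
  proof (rule cover_num_le_card)
    show "finite ((\<lambda>S. fiber S x) ` ?C)" using assms(1) by simp
    show "fiber E x \<subseteq> \<Union> ((\<lambda>S. fiber S x) ` ?C)" using assms(2) by (auto simp: fiber_def)
    show "\<forall>T\<in>(\<lambda>S. fiber S x) ` ?C. ddiam dist T \<le> ereal \<delta>" using assms(3) by (auto intro: ddiam_fiber_le)
  qed
  also have "\<dots> \<le> real (card ?C)" using assms(1) by (simp add: card_image_le)
  finally show ?thesis .
qed

lemma cover_num_product_ge_separated: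
  fixes E :: "('a::metric_space \<times> 'b::metric_space) set"
  assumes "finite P" "separated \<delta> P" "\<forall>p\<in>P. ereal c \<le> cover_num dist \<delta> (fiber E p)"
  shows "ereal (real (card P) * c) \<le> cover_num max_dist \<delta> E"
proof (rule cover_num_greatest)
  fix C assume C: "finite C" "E \<subseteq> \<Union>C" "\<forall>S\<in>C. ddiam max_dist S \<le> ereal \<delta>"
  define Cp where "Cp p = {S\<in>C. fiber S p \<noteq> {}}" for p
  have c_le: "c \<le> real (card (Cp p))" if "p \<in> P" for p
    using order.trans[OF assms(3)[rule_format, OF that] cover_num_fiber_le_card_meeting[OF C]]
    by (simp add: Cp_def)
  have disjoint: "Cp p \<inter> Cp q = {}" if "p \<in> P" "q \<in> P" "p \<noteq> q" for p q
  proof (rule ccontr)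
    assume "Cp p \<inter> Cp q \<noteq> {}"
    then obtain S y y' where S: "S \<in> C" "(p, y) \<in> S" "(q, y') \<in> S" by (auto simp: Cp_def fiber_def)
    have "max_dist (p, y) (q, y') \<le> \<delta>" by (rule ddiam_leD[OF C(3)[rule_format, OF S(1)] S(2,3)])
    then have "dist p q \<le> \<delta>" by (simp add: max_dist_def)
    with assms(2) that show False by (force simp: separated_def)
  qed
  have "real (card P) * c \<le> (\<Sum>p\<in>P. real (card (Cp p)))"
    using sum_mono[of P "\<lambda>_. c", OF c_le] by simp
  also have "\<dots> = real (card (\<Union>p\<in>P. Cp p))"
    using card_UN_disjoint[of P Cp] assms(1) C(1) disjoint by (simp add: Cp_def)
  also have "card (\<Union>p\<in>P. Cp p) \<le> card C" by (rule card_mono[OF C(1)]) (auto simp: Cp_def)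
  finally show "real (card P) * c \<le> real (card C)" by simp
qed

lemma cover_num_le_card_net:
  fixes A :: "'a::metric_space set"
  assumes "finite P" "\<forall>a\<in>A. \<exists>p\<in>P. dist a p \<le> \<delta>"
  shows "cover_num dist (2 * \<delta>) A \<le> real (card P)"
proof -
  define C where "C = (\<lambda>p. {a\<in>A. dist a p \<le> \<delta>}) ` P"
  have "cover_num dist (2 * \<delta>) A \<le> real (card C)"
  proof (rule cover_num_le_card)
    show "finite C" "A \<subseteq> \<Union>C" using assms by (auto simp: C_def)
    show "\<forall>S\<in>C. ddiam dist S \<le> ereal (2 * \<delta>)"
    proof
      fix S assume "S \<in> C"
      then obtain p where S: "S = {a\<in>A. dist a p \<le> \<delta>}" by (auto simp: C_def)
      show "ddiam dist S \<le> ereal (2 * \<delta>)"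
      proof (rule ddiam_le)
        fix x y assume "x \<in> S" "y \<in> S"
        then show "dist x y \<le> 2 * \<delta>" using dist_triangle2[of x y p] by (simp add: S)
      qed
    qed
  qed
  also have "\<dots> \<le> real (card P)" using card_image_le[OF assms(1)] by (simp add: C_def)
  finally show ?thesis .
qed

lemma maximal_separated_or_unbounded:
  fixes A :: "'a::metric_space set"
  assumes "0 \<le> \<delta>"
  obtains P where "finite P" "P \<subseteq> A" "separated \<delta> P" "\<forall>a\<in>A. \<exists>p\<in>P. dist a p \<le> \<delta>"
  | "\<And>n. \<exists>P. finite P \<and> P \<subseteq> A \<and> separated \<delta> P \<and> card P = n"
proof (cases "\<exists>P. finite P \<and> P \<subseteq> A \<and> separated \<delta> P \<and> (\<forall>a\<in>A. \<exists>p\<in>P. dist a p \<le> \<delta>)")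
  case True
  then show thesis using that(1) by blast
next
  case no_net: False
  have "\<exists>P. finite P \<and> P \<subseteq> A \<and> separated \<delta> P \<and> card P = n" for n
  proof (induction n)
    case 0
    show ?case by (intro exI[of _ "{}"]) (simp add: separated_def)
  next
    case (Suc n)
    then obtain P where P: "finite P" "P \<subseteq> A" "separated \<delta> P" "card P = n" by blast
    then obtain a where a: "a \<in> A" "\<forall>p\<in>P. \<delta> < dist a p" using no_net by (auto simp: not_le)
    then have "a \<notin> P" using assms by force
    have "separated \<delta> (insert a P)"
      using P(3) a(2) by (auto simp: separated_def dist_commute)
    with P a \<open>a \<notin> P\<close> show ?case by (intro exI[of _ "insert a P"]) auto
  qed
  then show thesis by (rule that(2))
qed

text \<open>A maximal \<delta>-separated subset of A is a 2\<delta>-net of A; if none exists, N_\<delta>(E) is infinite.\<close>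
lemma cover_num_product_ge:
  fixes E :: "('a::metric_space \<times> 'b::metric_space) set" and A :: "'a set"
  assumes "0 \<le> \<delta>" "0 \<le> c" "\<forall>x\<in>A. ereal c \<le> cover_num dist \<delta> (fiber E x)"
  shows "cover_num dist (2 * \<delta>) A * ereal c \<le> cover_num max_dist \<delta> E"
proof (cases rule: maximal_separated_or_unbounded[OF assms(1), of A])
  case (1 P)
  have "cover_num dist (2 * \<delta>) A * ereal c \<le> ereal (real (card P)) * ereal c"
    using cover_num_le_card_net[OF 1(1,4)] assms(2) by (intro ereal_mult_right_mono) auto
  also have "\<dots> \<le> cover_num max_dist \<delta> E"
    using cover_num_product_ge_separated[OF 1(1,3)] 1(2) assms(3) by auto
  finally show ?thesis .
next
  case 2
  show ?thesis
  proof (cases "c = 0")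
    case True
    then show ?thesis using cover_num_nonneg[of max_dist \<delta> E] by (simp add: zero_ereal_def[symmetric])
  next
    case False
    have "ereal (real n * c) \<le> cover_num max_dist \<delta> E" for n
      using 2[of n] assms(3) by (auto intro!: cover_num_product_ge_separated)
    have "cover_num max_dist \<delta> E = \<infinity>"
    proof (rule ccontr)
      assume "cover_num max_dist \<delta> E \<noteq> \<infinity>"
      then obtain b where b: "cover_num max_dist \<delta> E = ereal b"
        using cover_num_nonneg[of max_dist \<delta> E] by (cases "cover_num max_dist \<delta> E") auto
      obtain n :: nat where "b / c < real n" using reals_Archimedean2 by blast
      then have "b < real n * c" using False assms(2) by (simp add: divide_less_eq)
      with \<open>ereal (real n * c) \<le> cover_num max_dist \<delta> E\<close> b show False by simp
    qed
    then show ?thesis by simp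
  qed
qed

lemma log_cover_num_add_ln_le:
  assumes "1 \<le> cover_num d \<delta> A" "1 \<le> c" "cover_num d \<delta> A * ereal c \<le> cover_num d' \<delta>' E"
  shows "log_cover_num d \<delta> A + ereal (ln c) \<le> log_cover_num d' \<delta>' E"
proof (cases "cover_num d' \<delta>' E = \<infinity>")
  case True
  then show ?thesis by (simp add: log_cover_num_def)
next
  case False
  then obtain b where b: "cover_num d' \<delta>' E = ereal b"
    using cover_num_nonneg[of d' \<delta>' E] by (cases "cover_num d' \<delta>' E") auto
  obtain a where a: "cover_num d \<delta> A = ereal a" "1 \<le> a" "a * c \<le> b"
    using assms b by (cases "cover_num d \<delta> A") auto
  have "ln a + ln c = ln (a * c)" using a(2) assms(2) by (simp add: ln_mult)
  also have "\<dots> \<le> ln (max 1 b)" using a assms(2) by (intro ln_mono) (auto simp: one_le_mult_iff)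
  finally show ?thesis using a b by (simp add: log_cover_num_def)
qed

lemma eventually_at_right_0_interval: "0 < b \<Longrightarrow> eventually (\<lambda>\<delta>. 0 < \<delta> \<and> \<delta> < b) (at_right (0::real))"
  unfolding eventually_at_right_field by auto

lemma filtermap_double_at_right_0: "filtermap ((*) 2) (at_right 0) = at_right (0::real)"
  using filtermap_times_pos_at_right[of 2 0] by simp

text \<open>Replacing \<delta> by 2\<delta> changes \<bar>ln \<delta>\<bar> only by ln 2, which is negligible against the slack
  y + s - r once \<bar>ln \<delta>\<bar> is large.\<close>
lemma eventually_log_ratio_shift:
  fixes f g :: "real \<Rightarrow> ereal"
  assumes "r < y + s"
    and ev: "eventually (\<lambda>\<delta>. f (2 * \<delta>) + ereal (s * \<bar>ln \<delta>\<bar>) \<le> g \<delta>) (at_right 0)"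
  shows "eventually (\<lambda>\<delta>. ereal y < f (2 * \<delta>) / ereal \<bar>ln (2 * \<delta>)\<bar> \<longrightarrow> ereal r < g \<delta> / ereal \<bar>ln \<delta>\<bar>)
    (at_right 0)"
proof -
  define K where "K = \<bar>y\<bar> * ln 2 / (y + s - r)"
  have small: "eventually (\<lambda>\<delta>. 0 < \<delta> \<and> \<delta> < 1/2) (at_right (0::real))"
    by (rule eventually_at_right_0_interval) simp
  have ln_small: "eventually (\<lambda>\<delta>. ln \<delta> < - K) (at_right (0::real))"
    using ln_at_0 unfolding filterlim_at_bot_dense by blast
  have "eventually (\<lambda>\<delta>. (0 < \<delta> \<and> \<delta> < 1/2) \<and> ln \<delta> < - K \<and>
      f (2 * \<delta>) + ereal (s * \<bar>ln \<delta>\<bar>) \<le> g \<delta>) (at_right 0)"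
    by (rule eventually_conj[OF small eventually_conj[OF ln_small ev]])
  then show ?thesis
  proof (rule eventually_mono, intro impI)
    fix \<delta> :: real
    assume H: "(0 < \<delta> \<and> \<delta> < 1/2) \<and> ln \<delta> < - K \<and> f (2 * \<delta>) + ereal (s * \<bar>ln \<delta>\<bar>) \<le> g \<delta>"
      and y: "ereal y < f (2 * \<delta>) / ereal \<bar>ln (2 * \<delta>)\<bar>"
    define L where "L = - ln \<delta>"
    have "ln (2 * \<delta>) < 0" using H by simp
    moreover have "ln (2 * \<delta>) = ln 2 + ln \<delta>" using H by (simp add: ln_mult)
    ultimately have L: "\<bar>ln \<delta>\<bar> = L" "K < L" "\<bar>ln (2 * \<delta>)\<bar> = L - ln 2" "0 < L - ln 2" "0 < L"
      using H ln_gt_zero[of 2] by (auto simp: L_def)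
    have "\<bar>y\<bar> * ln 2 \<le> (y + s - r) * L"
      using L(2) assms(1) by (simp add: K_def divide_less_eq mult.commute)
    have "r * L \<le> s * L + y * (L - ln 2)"
    proof -
      have "r * L = s * L + y * L - (y + s - r) * L" by (simp add: algebra_simps)
      also have "\<dots> \<le> s * L + y * L - \<bar>y\<bar> * ln 2" using \<open>\<bar>y\<bar> * ln 2 \<le> _\<close> by linarith
      also have "\<dots> \<le> s * L + y * (L - ln 2)" by (simp add: algebra_simps mult_right_mono)
      finally show ?thesis .
    qed
    then have "ereal (r * L) \<le> ereal (s * L) + ereal (y * (L - ln 2))" by simp
    also have "\<dots> < ereal (s * L) + f (2 * \<delta>)"
      using y L(3,4) by (intro ereal_less_add) (simp_all add: ereal_less_divide_iff)
    also have "\<dots> \<le> g \<delta>" using H L(1) by (simp add: add.commute)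
    finally show "ereal r < g \<delta> / ereal \<bar>ln \<delta>\<bar>"
      using L(1,5) by (simp add: ereal_less_divide_iff)
  qed
qed

lemma Liminf_log_ratio_shift:
  fixes f g :: "real \<Rightarrow> ereal"
  assumes ev: "eventually (\<lambda>\<delta>. f (2 * \<delta>) + ereal (s * \<bar>ln \<delta>\<bar>) \<le> g \<delta>) (at_right 0)"
  shows "Liminf (at_right 0) (\<lambda>\<delta>. f \<delta> / ereal \<bar>ln \<delta>\<bar>) + ereal s
    \<le> Liminf (at_right 0) (\<lambda>\<delta>. g \<delta> / ereal \<bar>ln \<delta>\<bar>)"
  unfolding le_Liminf_iff
proof (intro allI impI)
  define LF where "LF = Liminf (at_right 0) (\<lambda>\<delta>. f \<delta> / ereal \<bar>ln \<delta>\<bar>)"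
  fix z assume "z < LF + ereal s"
  then obtain r where r: "z < ereal r" "ereal r < LF + ereal s" using ereal_dense2 by blast
  then have "ereal (r - s) < LF" by (cases LF) auto
  then obtain y where y: "r - s < y" "ereal y < LF" using ereal_dense2 by force
  have "eventually (\<lambda>\<delta>. ereal y < f \<delta> / ereal \<bar>ln \<delta>\<bar>) (at_right 0)"
    using less_LiminfD[OF y(2)[unfolded LF_def]] .
  then have "eventually (\<lambda>\<delta>. ereal y < f (2 * \<delta>) / ereal \<bar>ln (2 * \<delta>)\<bar>) (at_right 0)"
    by (subst (asm) filtermap_double_at_right_0[symmetric]) (simp add: eventually_filtermap)
  with eventually_log_ratio_shift[of r y s, OF _ ev] y(1)
  have "eventually (\<lambda>\<delta>. ereal r < g \<delta> / ereal \<bar>ln \<delta>\<bar>) (at_right 0)"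
    by (auto elim: eventually_elim2)
  then show "eventually (\<lambda>\<delta>. z < g \<delta> / ereal \<bar>ln \<delta>\<bar>) (at_right 0)"
    by (rule eventually_mono) (rule less_trans[OF r(1)])
qed

lemma Limsup_log_ratio_shift:
  fixes f g :: "real \<Rightarrow> ereal"
  assumes ev: "eventually (\<lambda>\<delta>. f (2 * \<delta>) + ereal (s * \<bar>ln \<delta>\<bar>) \<le> g \<delta>) (at_right 0)"
  shows "Limsup (at_right 0) (\<lambda>\<delta>. f \<delta> / ereal \<bar>ln \<delta>\<bar>) + ereal s
    \<le> Limsup (at_right 0) (\<lambda>\<delta>. g \<delta> / ereal \<bar>ln \<delta>\<bar>)"
proof (rule ccontr)
  define LF where "LF = Limsup (at_right 0) (\<lambda>\<delta>. f \<delta> / ereal \<bar>ln \<delta>\<bar>)"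
  define LG where "LG = Limsup (at_right 0) (\<lambda>\<delta>. g \<delta> / ereal \<bar>ln \<delta>\<bar>)"
  assume "\<not> LF + ereal s \<le> LG"
  then have "LG < LF + ereal s" by simp
  then obtain r where r: "LG < ereal r" "ereal r < LF + ereal s" using ereal_dense2 by blast
  then have "ereal (r - s) < LF" by (cases LF) auto
  then obtain y where y: "r - s < y" "ereal y < LF" using ereal_dense2 by force
  have "frequently (\<lambda>\<delta>. ereal y < f \<delta> / ereal \<bar>ln \<delta>\<bar>) (at_right 0)"
  proof (rule ccontr)
    assume "\<not> ?thesis"
    then have "eventually (\<lambda>\<delta>. f \<delta> / ereal \<bar>ln \<delta>\<bar> \<le> ereal y) (at_right 0)"
      by (simp add: not_frequently not_less)
    then have "LF \<le> ereal y" unfolding LF_def by (rule Limsup_bounded)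
    with y(2) show False by simp
  qed
  then have freq: "frequently (\<lambda>\<delta>. ereal y < f (2 * \<delta>) / ereal \<bar>ln (2 * \<delta>)\<bar>) (at_right 0)"
    by (subst (asm) filtermap_double_at_right_0[symmetric]) (simp add: frequently_filtermap)
  have below: "eventually (\<lambda>\<delta>. g \<delta> / ereal \<bar>ln \<delta>\<bar> < ereal r) (at_right 0)"
    using Limsup_lessD[OF r(1)[unfolded LG_def]] .
  have "frequently (\<lambda>\<delta>. ereal y < f (2 * \<delta>) / ereal \<bar>ln (2 * \<delta>)\<bar> \<and>
      ((ereal y < f (2 * \<delta>) / ereal \<bar>ln (2 * \<delta>)\<bar> \<longrightarrow> ereal r < g \<delta> / ereal \<bar>ln \<delta>\<bar>) \<and>
       g \<delta> / ereal \<bar>ln \<delta>\<bar> < ereal r)) (at_right 0)"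
    using y(1) by (intro frequently_eventually_frequently[OF freq] eventually_conj
        eventually_log_ratio_shift[OF _ ev] below) auto
  then have "frequently (\<lambda>_. False) (at_right (0::real))"
    by (rule frequently_elim1) auto
  then show False by simp
qed

lemma log_ratio_nonneg: "0 \<le> log_cover_num d \<delta> E / ereal \<bar>ln \<delta>\<bar>"
  using log_cover_num_nonneg[of d \<delta> E] by simp

lemma lower_box_dim_nonneg: "0 \<le> lower_box_dim d E"
  unfolding lower_box_dim_def by (intro Liminf_bounded always_eventually allI log_ratio_nonneg)

lemma upper_box_dim_nonneg: "0 \<le> upper_box_dim d E"
  using lower_box_dim_nonneg[of d E] Liminf_le_Limsup[of "at_right (0::real)"]
  unfolding lower_box_dim_def upper_box_dim_def by (meson order_trans trivial_limit_at_right_real)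

lemma lower_box_dim_empty: "lower_box_dim d {} = 0"
  unfolding lower_box_dim_def log_cover_num_empty by (simp add: Liminf_const)

lemma upper_box_dim_empty: "upper_box_dim d {} = 0"
  unfolding upper_box_dim_def log_cover_num_empty by (simp add: Limsup_const)

lemma upper_box_dim_mono:
  assumes "E \<subseteq> F"
  shows "upper_box_dim d E \<le> upper_box_dim d F"
  unfolding upper_box_dim_def
proof (rule Limsup_mono)
  show "eventually (\<lambda>\<delta>. log_cover_num d \<delta> E / ereal \<bar>ln \<delta>\<bar> \<le> log_cover_num d \<delta> F / ereal \<bar>ln \<delta>\<bar>)
      (at_right 0)"
  proof (rule eventually_mono[OF eventually_at_right_0_interval[of 1]])
    fix \<delta> :: real assume "0 < \<delta> \<and> \<delta> < 1"
    then have "0 < ereal \<bar>ln \<delta>\<bar>" by simp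
    with log_cover_num_mono[OF assms]
    show "log_cover_num d \<delta> E / ereal \<bar>ln \<delta>\<bar> \<le> log_cover_num d \<delta> F / ereal \<bar>ln \<delta>\<bar>"
      by (rule ereal_divide_right_mono)
  qed simp
qed

lemma log_ratio_Un_less:
  assumes "0 < L" "ln 2 < (y' - y) * L"
    and "log_cover_num d \<delta> A / ereal L < ereal y" "log_cover_num d \<delta> B / ereal L < ereal y"
  shows "log_cover_num d \<delta> (A \<union> B) / ereal L < ereal y'"
proof -
  have "max (log_cover_num d \<delta> A) (log_cover_num d \<delta> B) < ereal (y * L)"
    using assms(1,3,4) by (simp add: ereal_divide_less_iff)
  then have "ereal (ln 2) + max (log_cover_num d \<delta> A) (log_cover_num d \<delta> B) < ereal (ln 2) + ereal (y * L)"
    by (intro ereal_less_add) simp_all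
  with log_cover_num_Un_le have "log_cover_num d \<delta> (A \<union> B) < ereal (ln 2) + ereal (y * L)"
    by (rule order.strict_trans1)
  also have "\<dots> < ereal (y' * L)" using assms(2) by (simp add: algebra_simps)
  finally show ?thesis using assms(1) by (simp add: ereal_divide_less_iff)
qed

lemma upper_box_dim_Un: "upper_box_dim d (A \<union> B) \<le> max (upper_box_dim d A) (upper_box_dim d B)"
  unfolding Limsup_le_iff upper_box_dim_def
proof (intro allI impI)
  let ?q = "\<lambda>S \<delta>. log_cover_num d \<delta> S / ereal \<bar>ln \<delta>\<bar>"
  fix z assume "max (Limsup (at_right 0) (?q A)) (Limsup (at_right 0) (?q B)) < z"
  then obtain y where y: "max (Limsup (at_right 0) (?q A)) (Limsup (at_right 0) (?q B)) < ereal y"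
    "ereal y < z" using ereal_dense2 by blast
  then obtain y' where y': "y < y'" "ereal y' < z" using ereal_dense2 by force
  have qA: "eventually (\<lambda>\<delta>. ?q A \<delta> < ereal y) (at_right 0)"
    and qB: "eventually (\<lambda>\<delta>. ?q B \<delta> < ereal y) (at_right 0)"
    using y(1) by (auto intro: Limsup_lessD)
  have ln_small: "eventually (\<lambda>\<delta>. ln \<delta> < - (ln 2 / (y' - y))) (at_right (0::real))"
    using ln_at_0 unfolding filterlim_at_bot_dense by blast
  have small: "eventually (\<lambda>\<delta>. 0 < \<delta> \<and> \<delta> < 1) (at_right (0::real))"
    by (rule eventually_at_right_0_interval) simp
  have "eventually (\<lambda>\<delta>. (?q A \<delta> < ereal y \<and> ?q B \<delta> < ereal y) \<and>
      ln \<delta> < - (ln 2 / (y' - y)) \<and> 0 < \<delta> \<and> \<delta> < 1) (at_right 0)"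
    by (rule eventually_conj[OF eventually_conj[OF qA qB] eventually_conj[OF ln_small small]])
  then show "eventually (\<lambda>\<delta>. ?q (A \<union> B) \<delta> < z) (at_right 0)"
  proof (rule eventually_mono)
    fix \<delta> :: real
    assume H: "(?q A \<delta> < ereal y \<and> ?q B \<delta> < ereal y) \<and> ln \<delta> < - (ln 2 / (y' - y)) \<and> 0 < \<delta> \<and> \<delta> < 1"
    have "ln 2 / (y' - y) < \<bar>ln \<delta>\<bar>" using H by auto
    then have "ln 2 < (y' - y) * \<bar>ln \<delta>\<bar>" using y'(1) by (simp add: divide_less_eq mult.commute)
    then have "?q (A \<union> B) \<delta> < ereal y'" using H by (intro log_ratio_Un_less) auto
    then show "?q (A \<union> B) \<delta> < z" using y'(2) by (rule less_trans)
  qed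
qed

lemma upper_box_dim_UN_atMost:
  fixes n :: nat
  shows "upper_box_dim d (\<Union>m\<le>n. F m) \<le> (SUP m. upper_box_dim d (F m))"
proof (induction n)
  case 0
  have "upper_box_dim d (F 0) \<le> (SUP m. upper_box_dim d (F m))" by (rule SUP_upper) simp
  then show ?case by simp
next
  case (Suc n)
  have "(\<Union>m\<le>Suc n. F m) = F (Suc n) \<union> (\<Union>m\<le>n. F m)" by (auto simp: atMost_Suc)
  then have "upper_box_dim d (\<Union>m\<le>Suc n. F m)
      \<le> max (upper_box_dim d (F (Suc n))) (upper_box_dim d (\<Union>m\<le>n. F m))"
    by (simp add: upper_box_dim_Un)
  also have "\<dots> \<le> (SUP m. upper_box_dim d (F m))"
  proof (rule max.boundedI)
    show "upper_box_dim d (F (Suc n)) \<le> (SUP m. upper_box_dim d (F m))" by (rule SUP_upper) simp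
  qed (rule Suc.IH)
  finally show ?case .
qed

definition cover_growth :: "('a \<Rightarrow> 'a \<Rightarrow> real) \<Rightarrow> real \<Rightarrow> real \<Rightarrow> 'a set \<Rightarrow> bool" where
  "cover_growth d s \<delta>\<^sub>0 S \<longleftrightarrow> (\<forall>\<delta>. 0 < \<delta> \<longrightarrow> \<delta> < \<delta>\<^sub>0 \<longrightarrow> ereal (\<delta> powr (- s)) \<le> cover_num d \<delta> S)"

lemma cover_growth_mono:
  assumes "cover_growth d s \<delta>\<^sub>0 S" "S \<subseteq> T" "\<delta>\<^sub>1 \<le> \<delta>\<^sub>0"
  shows "cover_growth d s \<delta>\<^sub>1 T"
  unfolding cover_growth_def
proof (intro allI impI)
  fix \<delta> :: real assume "0 < \<delta>" "\<delta> < \<delta>\<^sub>1"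
  then have "ereal (\<delta> powr (- s)) \<le> cover_num d \<delta> S"
    using assms(1,3) unfolding cover_growth_def by simp
  also have "\<dots> \<le> cover_num d \<delta> T" by (rule cover_num_mono[OF assms(2)])
  finally show "ereal (\<delta> powr (- s)) \<le> cover_num d \<delta> T" .
qed

lemma cover_growth_zero: "S \<noteq> {} \<Longrightarrow> cover_growth d 0 1 S"
  using cover_num_nonempty[of S d] by (simp add: cover_growth_def one_ereal_def[symmetric])

lemma cover_growth_of_lower_box_dim:
  assumes "0 \<le> s" "ereal s < lower_box_dim d S"
  obtains \<delta>\<^sub>0 where "0 < \<delta>\<^sub>0" "cover_growth d s \<delta>\<^sub>0 S"
proof -
  have "eventually (\<lambda>\<delta>. ereal s < log_cover_num d \<delta> S / ereal \<bar>ln \<delta>\<bar>) (at_right 0)"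
    using less_LiminfD[OF assms(2)[unfolded lower_box_dim_def]] .
  then have "eventually (\<lambda>\<delta>. ereal (\<delta> powr (- s)) \<le> cover_num d \<delta> S) (at_right 0)"
  proof (rule eventually_mono[OF eventually_conj[OF _ eventually_at_right_0_interval[of 1]]])
    fix \<delta> :: real
    assume H: "ereal s < log_cover_num d \<delta> S / ereal \<bar>ln \<delta>\<bar> \<and> 0 < \<delta> \<and> \<delta> < 1"
    define L where "L = \<bar>ln \<delta>\<bar>"
    have L: "0 < L" "\<delta> powr (- s) = exp (s * L)" using H by (auto simp: L_def powr_def)
    have "1 \<le> \<delta> powr (- s)" using L assms(1) by simp
    show "ereal (\<delta> powr (- s)) \<le> cover_num d \<delta> S"
    proof (cases "cover_num d \<delta> S")
      case (real N)
      then have "s * L < ln (max 1 N)"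
        using H[folded L_def] L(1) by (simp add: log_cover_num_def pos_less_divide_eq)
      then have "exp (s * L) < exp (ln (max 1 N))" by (rule exp_less_mono)
      then have "\<delta> powr (- s) < max 1 N" using L(2) by (simp del: exp_ln_iff)
      with \<open>1 \<le> \<delta> powr (- s)\<close> real show ?thesis by (auto simp: max_def split: if_splits)
    next
      case PInf
      then show ?thesis by simp
    next
      case MInf
      then show ?thesis using cover_num_nonneg[of d \<delta> S] by simp
    qed
  qed simp
  then obtain \<delta>\<^sub>0 where "0 < \<delta>\<^sub>0" "\<forall>\<delta>>0. \<delta> < \<delta>\<^sub>0 \<longrightarrow> ereal (\<delta> powr (- s)) \<le> cover_num d \<delta> S"
    unfolding eventually_at_right_field by auto
  then show thesis by (intro that) (auto simp: cover_growth_def)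
qed

lemma cover_growth_of_SUP_lower_box_dim:
  assumes "0 \<le> s" "s = 0 \<or> ereal s < (SUP n. lower_box_dim d (G n))" "\<exists>n. G n \<noteq> {}"
  obtains n k where "cover_growth d s (1 / real (Suc k)) (G n)"
proof -
  obtain n \<delta>\<^sub>0 where n: "0 < \<delta>\<^sub>0" "cover_growth d s \<delta>\<^sub>0 (G n)"
    using assms(2)
  proof
    assume "s = 0"
    obtain n where "G n \<noteq> {}" using assms(3) by blast
    then show thesis using that[of 1 n] cover_growth_zero[of "G n" d] \<open>s = 0\<close> by simp
  next
    assume "ereal s < (SUP n. lower_box_dim d (G n))"
    then obtain n where "ereal s < lower_box_dim d (G n)" by (auto simp: less_SUP_iff)
    then obtain \<delta>\<^sub>0 where "0 < \<delta>\<^sub>0" "cover_growth d s \<delta>\<^sub>0 (G n)"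
      by (rule cover_growth_of_lower_box_dim[OF assms(1)])
    then show thesis by (rule that)
  qed
  obtain k where "inverse (real (Suc k)) < \<delta>\<^sub>0" using reals_Archimedean[OF n(1)] by blast
  then have "cover_growth d s (1 / real (Suc k)) (G n)"
    by (intro cover_growth_mono[OF n(2)]) (auto simp: inverse_eq_divide)
  then show thesis by (rule that)
qed

lemma box_dims_product_ge:
  fixes E :: "('a::metric_space \<times> 'b::metric_space) set" and A :: "'a set"
  assumes "A \<noteq> {}" "0 \<le> s" "0 < \<delta>\<^sub>0" "\<forall>x\<in>A. cover_growth dist s \<delta>\<^sub>0 (fiber E x)"
  shows "lower_box_dim dist A + ereal s \<le> lower_box_dim max_dist E"
    and "upper_box_dim dist A + ereal s \<le> upper_box_dim max_dist E"
proof -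
  have "eventually (\<lambda>\<delta>. log_cover_num dist (2 * \<delta>) A + ereal (s * \<bar>ln \<delta>\<bar>) \<le> log_cover_num max_dist \<delta> E)
      (at_right 0)"
  proof (rule eventually_mono[OF eventually_at_right_0_interval[of "min \<delta>\<^sub>0 1"]])
    fix \<delta> :: real assume "0 < \<delta> \<and> \<delta> < min \<delta>\<^sub>0 1"
    then have \<delta>: "0 < \<delta>" "\<delta> < \<delta>\<^sub>0" "\<delta> < 1" by auto
    have ln_c: "ln (\<delta> powr (- s)) = s * \<bar>ln \<delta>\<bar>" using \<delta> by (simp add: ln_powr)
    have c: "1 \<le> \<delta> powr (- s)" using powr_mono'[of "- s" 0 \<delta>] \<delta> assms(2) by simp
    have "cover_num dist (2 * \<delta>) A * ereal (\<delta> powr (- s)) \<le> cover_num max_dist \<delta> E"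
      using \<delta> assms(4) by (intro cover_num_product_ge) (auto simp: cover_growth_def)
    from log_cover_num_add_ln_le[OF cover_num_nonempty[OF assms(1)] c this]
    show "log_cover_num dist (2 * \<delta>) A + ereal (s * \<bar>ln \<delta>\<bar>) \<le> log_cover_num max_dist \<delta> E"
      by (simp only: ln_c)
  qed (use assms(3) in simp)
  then show "lower_box_dim dist A + ereal s \<le> lower_box_dim max_dist E"
    and "upper_box_dim dist A + ereal s \<le> upper_box_dim max_dist E"
    unfolding lower_box_dim_def upper_box_dim_def
    by (rule Liminf_log_ratio_shift, rule Limsup_log_ratio_shift)
qed

lemma packing_dim_le_SUP:
  assumes "A \<subseteq> (\<Union>n::nat. F n)"
  shows "packing_dim d A \<le> (SUP n. upper_box_dim d (F n))"
  unfolding packing_dim_def using assms by (intro Inf_lower CollectI exI[of _ F]) simp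

lemma lower_packing_dim_le_SUP:
  assumes "A \<subseteq> (\<Union>n::nat. F n)"
  shows "lower_packing_dim d A \<le> (SUP n. lower_box_dim d (F n))"
  unfolding lower_packing_dim_def using assms by (intro Inf_lower CollectI exI[of _ F]) simp

lemma inc_packing_dim_le_SUP:
  assumes "incseq F" "(\<Union>n::nat. F n) = A"
  shows "inc_packing_dim d A \<le> (SUP n. lower_box_dim d (F n))"
  unfolding inc_packing_dim_def using assms by (intro Inf_lower CollectI exI[of _ F]) simp

lemma packing_dim_greatest:
  "(\<And>F. E \<subseteq> (\<Union>n::nat. F n) \<Longrightarrow> c \<le> (SUP n. upper_box_dim d (F n))) \<Longrightarrow> c \<le> packing_dim d E"
  unfolding packing_dim_def by (rule Inf_greatest) blast

lemma lower_packing_dim_greatest: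
  "(\<And>F. E \<subseteq> (\<Union>n::nat. F n) \<Longrightarrow> c \<le> (SUP n. lower_box_dim d (F n))) \<Longrightarrow> c \<le> lower_packing_dim d E"
  unfolding lower_packing_dim_def by (rule Inf_greatest) blast

lemma inc_packing_dim_greatest:
  "(\<And>F. incseq F \<Longrightarrow> (\<Union>n::nat. F n) = E \<Longrightarrow> c \<le> (SUP n. lower_box_dim d (F n))) \<Longrightarrow> c \<le> inc_packing_dim d E"
  unfolding inc_packing_dim_def by (rule Inf_greatest) blast

lemma packing_dim_nonneg: "0 \<le> packing_dim d E"
  by (rule packing_dim_greatest) (simp add: SUP_upper2 upper_box_dim_nonneg)

lemma lower_packing_dim_nonneg: "0 \<le> lower_packing_dim d E"
  by (rule lower_packing_dim_greatest) (simp add: SUP_upper2 lower_box_dim_nonneg)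

lemma inc_packing_dim_nonneg: "0 \<le> inc_packing_dim d E"
  by (rule inc_packing_dim_greatest) (simp add: SUP_upper2 lower_box_dim_nonneg)

definition fiber_growth_set ::
    "'a::metric_space set \<Rightarrow> ('a \<times> 'b::metric_space) set \<Rightarrow> real \<Rightarrow> nat \<Rightarrow> 'a set" where
  "fiber_growth_set A E s k = {x\<in>A. cover_growth dist s (1 / real (Suc k)) (fiber E x)}"

lemma box_dims_fiber_growth_set:
  assumes "fiber_growth_set A E s k \<noteq> {}" "0 \<le> s"
  shows "lower_box_dim dist (fiber_growth_set A E s k) + ereal s \<le> lower_box_dim max_dist E"
    and "upper_box_dim dist (fiber_growth_set A E s k) + ereal s \<le> upper_box_dim max_dist E"
  using box_dims_product_ge[OF assms, of "1 / real (Suc k)" E] by (auto simp: fiber_growth_set_def)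

lemma fiber_growth_set_mono:
  assumes "E \<subseteq> E'" "k \<le> k'"
  shows "fiber_growth_set A E s k \<subseteq> fiber_growth_set A E' s k'"
proof -
  have "fiber E x \<subseteq> fiber E' x" for x using assms(1) by (auto simp: fiber_def)
  moreover have "1 / real (Suc k') \<le> 1 / real (Suc k)" using assms(2) by (simp add: frac_le)
  ultimately show ?thesis unfolding fiber_growth_set_def by (auto intro: cover_growth_mono)
qed

lemma UN_fiber_growth_set:
  assumes "E \<subseteq> (\<Union>n::nat. F n)" "\<And>x. x \<in> A \<Longrightarrow> fiber E x \<noteq> {}" "0 \<le> s"
    and "s = 0 \<or> ereal s < (INF x\<in>A. lower_packing_dim dist (fiber E x))"
  shows "A \<subseteq> (\<Union>n. \<Union>k. fiber_growth_set A (F n) s k)"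
proof
  fix x assume x: "x \<in> A"
  have "fiber E x \<subseteq> (\<Union>n. fiber (F n) x)" using assms(1) by (auto simp: fiber_def)
  then have "(INF x\<in>A. lower_packing_dim dist (fiber E x)) \<le> (SUP n. lower_box_dim dist (fiber (F n) x))"
    using x by (intro INF_lower2 lower_packing_dim_le_SUP)
  with assms(4) have "s = 0 \<or> ereal s < (SUP n. lower_box_dim dist (fiber (F n) x))"
    by (auto intro: less_le_trans)
  moreover have "\<exists>n. fiber (F n) x \<noteq> {}"
    using assms(2) x \<open>fiber E x \<subseteq> _\<close> by blast
  ultimately obtain n k where "cover_growth dist s (1 / real (Suc k)) (fiber (F n) x)"
    by (rule cover_growth_of_SUP_lower_box_dim[OF assms(3)])
  with x show "x \<in> (\<Union>n. \<Union>k. fiber_growth_set A (F n) s k)"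
    by (auto simp: fiber_growth_set_def)
qed

lemma incseq_fiber_growth_set: "incseq F \<Longrightarrow> incseq (\<lambda>k. fiber_growth_set A (F k) s k)"
  unfolding incseq_def by (intro allI impI fiber_growth_set_mono) simp_all

lemma UN_fiber_growth_set_incseq:
  assumes "incseq F" "(\<Union>n::nat. F n) = E" "\<And>x. x \<in> A \<Longrightarrow> fiber E x \<noteq> {}" "0 \<le> s"
    and "s = 0 \<or> ereal s < (INF x\<in>A. inc_packing_dim dist (fiber E x))"
  shows "(\<Union>k. fiber_growth_set A (F k) s k) = A"
proof
  show "(\<Union>k. fiber_growth_set A (F k) s k) \<subseteq> A" by (auto simp: fiber_growth_set_def)
  show "A \<subseteq> (\<Union>k. fiber_growth_set A (F k) s k)"
  proof
    fix x assume x: "x \<in> A"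
    have fibers: "incseq (\<lambda>n. fiber (F n) x)" "(\<Union>n. fiber (F n) x) = fiber E x"
      using assms(1,2) by (auto simp: incseq_def fiber_def)
    then have "(INF x\<in>A. inc_packing_dim dist (fiber E x)) \<le> (SUP n. lower_box_dim dist (fiber (F n) x))"
      using x by (intro INF_lower2 inc_packing_dim_le_SUP)
    with assms(5) have "s = 0 \<or> ereal s < (SUP n. lower_box_dim dist (fiber (F n) x))"
      by (auto intro: less_le_trans)
    moreover have "\<exists>n. fiber (F n) x \<noteq> {}" using assms(3) x fibers(2) by blast
    ultimately obtain n k where "cover_growth dist s (1 / real (Suc k)) (fiber (F n) x)"
      by (rule cover_growth_of_SUP_lower_box_dim[OF assms(4)])
    then have "x \<in> fiber_growth_set A (F n) s k" using x by (simp add: fiber_growth_set_def)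
    also have "\<dots> \<subseteq> fiber_growth_set A (F (max n k)) s (max n k)"
      using assms(1) by (intro fiber_growth_set_mono) (auto simp: incseq_def)
    finally show "x \<in> (\<Union>k. fiber_growth_set A (F k) s k)" by blast
  qed
qed

lemma SUP_add_le_of_nonempty:
  fixes dim :: "'a set \<Rightarrow> ereal"
  assumes "dim {} = 0" "\<And>S. 0 \<le> dim S" "\<exists>i. B i \<noteq> {}"
    and "\<And>i. B i \<noteq> {} \<Longrightarrow> dim (B i) + ereal s \<le> X"
  shows "(SUP i. dim (B i)) + ereal s \<le> X"
proof -
  obtain i\<^sub>0 where "B i\<^sub>0 \<noteq> {}" using assms(3) by blast
  have "dim (B i) + ereal s \<le> X" for i
  proof (cases "B i = {}")
    case True
    have "dim (B i) + ereal s \<le> dim (B i\<^sub>0) + ereal s"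
      using True assms(1,2) by (intro add_right_mono) simp
    also have "\<dots> \<le> X" by (rule assms(4)[OF \<open>B i\<^sub>0 \<noteq> {}\<close>])
    finally show ?thesis .
  qed (rule assms(4))
  then have "(SUP i. dim (B i) + ereal s) \<le> X" by (rule SUP_least)
  moreover have "(SUP i. dim (B i)) + ereal s = (SUP i. dim (B i) + ereal s)"
    by (rule SUP_ereal_add_left[symmetric]) auto
  ultimately show ?thesis by simp
qed

lemma packing_dim_product_ge_real:
  fixes E :: "('a::metric_space \<times> 'b::metric_space) set" and A :: "'a set"
  assumes "A \<noteq> {}" "\<And>x. x \<in> A \<Longrightarrow> fiber E x \<noteq> {}" "0 \<le> s"
    and "s = 0 \<or> ereal s < (INF x\<in>A. inc_packing_dim dist (fiber E x))"
  shows "packing_dim dist A + ereal s \<le> packing_dim max_dist E"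
proof (rule packing_dim_greatest)
  fix F :: "nat \<Rightarrow> ('a \<times> 'b) set" assume F: "E \<subseteq> (\<Union>n. F n)"
  txt \<open>The pieces are replaced by increasing finite unions, so that the increasing packing
    dimension of the fibers applies; the upper box dimension does not see the difference.\<close>
  define G where "G k = (\<Union>m\<le>k. F m) \<inter> E" for k
  let ?B = "\<lambda>k. fiber_growth_set A (G k) s k"
  have "incseq G" unfolding incseq_def G_def by (intro allI impI Int_mono UN_mono) auto
  moreover have "(\<Union>k. G k) = E" using F by (auto simp: G_def)
  ultimately have B: "(\<Union>k. ?B k) = A" by (rule UN_fiber_growth_set_incseq[OF _ _ assms(2-4)])
  have "upper_box_dim dist (?B k) + ereal s \<le> (SUP n. upper_box_dim max_dist (F n))" if "?B k \<noteq> {}" for k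
  proof -
    have "upper_box_dim dist (?B k) + ereal s \<le> upper_box_dim max_dist (G k)"
      by (rule box_dims_fiber_growth_set(2)[OF that assms(3)])
    also have "\<dots> \<le> upper_box_dim max_dist (\<Union>m\<le>k. F m)" by (rule upper_box_dim_mono) (simp add: G_def)
    also have "\<dots> \<le> (SUP n. upper_box_dim max_dist (F n))" by (rule upper_box_dim_UN_atMost)
    finally show ?thesis .
  qed
  then have "(SUP k. upper_box_dim dist (?B k)) + ereal s \<le> (SUP n. upper_box_dim max_dist (F n))"
    using B assms(1) by (intro SUP_add_le_of_nonempty upper_box_dim_empty upper_box_dim_nonneg) auto
  moreover have "packing_dim dist A \<le> (SUP k. upper_box_dim dist (?B k))"
    using B by (intro packing_dim_le_SUP) simp
  ultimately show "packing_dim dist A + ereal s \<le> (SUP n. upper_box_dim max_dist (F n))"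
    by (meson add_right_mono order_trans)
qed

lemma lower_packing_dim_product_ge_real:
  fixes E :: "('a::metric_space \<times> 'b::metric_space) set" and A :: "'a set"
  assumes "A \<noteq> {}" "\<And>x. x \<in> A \<Longrightarrow> fiber E x \<noteq> {}" "0 \<le> s"
    and "s = 0 \<or> ereal s < (INF x\<in>A. lower_packing_dim dist (fiber E x))"
  shows "lower_packing_dim dist A + ereal s \<le> lower_packing_dim max_dist E"
proof (rule lower_packing_dim_greatest)
  fix F :: "nat \<Rightarrow> ('a \<times> 'b) set" assume F: "E \<subseteq> (\<Union>n. F n)"
  define B where "B j = (case prod_decode j of (n, k) \<Rightarrow> fiber_growth_set A (F n) s k)" for j
  have B: "A \<subseteq> (\<Union>j. B j)"
  proof
    fix x assume "x \<in> A"
    then obtain n k where "x \<in> fiber_growth_set A (F n) s k"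
      using UN_fiber_growth_set[OF F assms(2-4)] by blast
    then have "x \<in> B (prod_encode (n, k))" by (simp add: B_def)
    then show "x \<in> (\<Union>j. B j)" by blast
  qed
  have "lower_box_dim dist (B j) + ereal s \<le> (SUP n. lower_box_dim max_dist (F n))" if "B j \<noteq> {}" for j
  proof (cases "prod_decode j")
    case (Pair n k)
    then have "lower_box_dim dist (B j) + ereal s \<le> lower_box_dim max_dist (F n)"
      using box_dims_fiber_growth_set(1)[of A "F n" s k] that assms(3) by (simp add: B_def)
    also have "\<dots> \<le> (SUP n. lower_box_dim max_dist (F n))" by (rule SUP_upper) simp
    finally show ?thesis .
  qed
  then have "(SUP j. lower_box_dim dist (B j)) + ereal s \<le> (SUP n. lower_box_dim max_dist (F n))"
    using B assms(1) by (intro SUP_add_le_of_nonempty lower_box_dim_empty lower_box_dim_nonneg) auto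
  moreover have "lower_packing_dim dist A \<le> (SUP j. lower_box_dim dist (B j))"
    by (rule lower_packing_dim_le_SUP[OF B])
  ultimately show "lower_packing_dim dist A + ereal s \<le> (SUP n. lower_box_dim max_dist (F n))"
    by (meson add_right_mono order_trans)
qed

lemma inc_packing_dim_product_ge_real:
  fixes E :: "('a::metric_space \<times> 'b::metric_space) set" and A :: "'a set"
  assumes "A \<noteq> {}" "\<And>x. x \<in> A \<Longrightarrow> fiber E x \<noteq> {}" "0 \<le> s"
    and "s = 0 \<or> ereal s < (INF x\<in>A. inc_packing_dim dist (fiber E x))"
  shows "inc_packing_dim dist A + ereal s \<le> inc_packing_dim max_dist E"
proof (rule inc_packing_dim_greatest)
  fix F :: "nat \<Rightarrow> ('a \<times> 'b) set" assume F: "incseq F" "(\<Union>n. F n) = E"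
  let ?B = "\<lambda>k. fiber_growth_set A (F k) s k"
  have B: "incseq ?B" "(\<Union>k. ?B k) = A"
    using incseq_fiber_growth_set[OF F(1)] UN_fiber_growth_set_incseq[OF F assms(2-4)] by simp_all
  have "lower_box_dim dist (?B k) + ereal s \<le> (SUP n. lower_box_dim max_dist (F n))" if "?B k \<noteq> {}" for k
    using box_dims_fiber_growth_set(1)[OF that assms(3)] by (rule order_trans) (rule SUP_upper, simp)
  then have "(SUP k. lower_box_dim dist (?B k)) + ereal s \<le> (SUP n. lower_box_dim max_dist (F n))"
    using B assms(1) by (intro SUP_add_le_of_nonempty lower_box_dim_empty lower_box_dim_nonneg) auto
  moreover have "inc_packing_dim dist A \<le> (SUP k. lower_box_dim dist (?B k))"
    by (rule inc_packing_dim_le_SUP[OF B])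
  ultimately show "inc_packing_dim dist A + ereal s \<le> (SUP n. lower_box_dim max_dist (F n))"
    by (meson add_right_mono order_trans)
qed

text \<open>The case s = 0 is needed separately because t may vanish.\<close>
lemma ereal_add_le_by_reals:
  fixes a t b :: ereal
  assumes "0 \<le> a" "0 \<le> t" "\<And>s. 0 \<le> s \<Longrightarrow> s = 0 \<or> ereal s < t \<Longrightarrow> a + ereal s \<le> b"
  shows "a + t \<le> b"
proof (rule ccontr)
  assume "\<not> a + t \<le> b"
  then have lt: "b < a + t" by simp
  have ab: "a \<le> b" using assms(3)[of 0] by (simp add: zero_ereal_def[symmetric])
  then obtain a' b' where a': "a = ereal a'" and b': "b = ereal b'" "a' \<le> b'"
    using lt assms(1) by (cases a; cases b) auto
  then have "ereal (b' - a') < t" using lt by (cases t) auto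
  then obtain s where s: "ereal (b' - a') < ereal s" "ereal s < t" using ereal_dense2 by blast
  have "a + ereal s \<le> b" using s b'(2) by (intro assms(3)) auto
  then show False using s a' b' by simp
qed

theorem theorem4p4:
  fixes E :: "('a::metric_space \<times> 'b::metric_space) set" and A :: "'a set"
  assumes "A \<noteq> {}"
    and "\<And>x. x \<in> A \<Longrightarrow> fiber E x \<noteq> {}"
  shows "packing_dim max_dist E \<ge>
           packing_dim dist A + (INF x\<in>A. inc_packing_dim dist (fiber E x))
    \<and> lower_packing_dim max_dist E \<ge>
           lower_packing_dim dist A + (INF x\<in>A. lower_packing_dim dist (fiber E x))
    \<and> inc_packing_dim max_dist E \<ge>
           inc_packing_dim dist A + (INF x\<in>A. inc_packing_dim dist (fiber E x))"
proof (intro conjI)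
  show "packing_dim dist A + (INF x\<in>A. inc_packing_dim dist (fiber E x)) \<le> packing_dim max_dist E"
    by (rule ereal_add_le_by_reals[OF packing_dim_nonneg INF_greatest[OF inc_packing_dim_nonneg]
          packing_dim_product_ge_real[OF assms]])
  show "lower_packing_dim dist A + (INF x\<in>A. lower_packing_dim dist (fiber E x))
      \<le> lower_packing_dim max_dist E"
    by (rule ereal_add_le_by_reals[OF lower_packing_dim_nonneg INF_greatest[OF lower_packing_dim_nonneg]
          lower_packing_dim_product_ge_real[OF assms]])
  show "inc_packing_dim dist A + (INF x\<in>A. inc_packing_dim dist (fiber E x)) \<le> inc_packing_dim max_dist E"
    by (rule ereal_add_le_by_reals[OF inc_packing_dim_nonneg INF_greatest[OF inc_packing_dim_nonneg]
          inc_packing_dim_product_ge_real[OF assms]])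
qed

end
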